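(* Let $V$ be a finite set, let $d$ be a monotone and consistent symmetric set function on $V$, and let $\tau\in\mathbb{R}$. Let $\mathcal{V}$ be a partition of $V$ such that $\lambda_{(V,d)}(u,v)\geq\tau$ for every pair $u,v\in V$ with $[u]=[v]$. Then for every pair $s,t\in V$ with $[s]\neq[t]$, $$\min\{\tau,\lambda_{(\mathcal{V},d_\mathcal{V})}([s],[t])\}=\min\{\tau,\lambda_{(V,d)}(s,t)\},$$ and moreover $$\min\{\tau,\lambda_{(\mathcal{V},d_\mathcal{V})}\}=\min\{\tau,\lambda_{(V,d)}\}.$$
   Context: A symmetric set function $d$ on a finite set $V$ assigns a real number $d(S,T)$ to every ordered pair $(S,T)$ of disjoint subsets of $V$, such that $d(S,T)=d(T,S)$. It is monotone if $d(S,T')\leq d(S,T)$ whenever $S,T$ are disjoint and $T'\subseteq T$; consistent if for all pairwise disjoint $R,S,T$, $d(S,R)\geq d(T,R)$ implies $d(S,R\cup T)\geq d(S\cup R,T)$. For $s,t\in V$, $\lambda_{(V,d)}(s,t)=\min\{d(S,V\setminus S)\mid s\in S\subseteq V,\ t\notin S\}$ and $\lambda_{(V,d)}=\min\{\lambda_{(V,d)}(s,t)\mid s,t\in V\}$, with the minimum of an empty set being $+\infty$. For a partition $\mathcal{V}$ of $V$ and $v\in V$, $[v]$ denotes the class of $\mathcal{V}$ containing $v$; for a set $\mathcal{S}$ of classes, $\cup\mathcal{S}$ is the union of its classes. The induced function on $\mathcal{V}$ is $d_\mathcal{V}(\mathcal{S},\mathcal{T})=d(\cup\mathcal{S},\cup\mathcal{T})$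 for disjoint sets $\mathcal{S},\mathcal{T}$ of classes; it is a symmetric set function on the finite set $\mathcal{V}$, and $\lambda_{(\mathcal{V},d_\mathcal{V})}(\cdot,\cdot)$, $\lambda_{(\mathcal{V},d_\mathcal{V})}$ are defined analogously. *)

theory Defs
  imports "HOL-Analysis.Analysis" "HOL-Library.Disjoint_Sets"
begin

text \<open>A set function on ground set V: d S T given for disjoint S, T \<subseteq> V
 (values elsewhere are irrelevant).\<close>

definition symmetric_setfun :: "'a set \<Rightarrow> ('a set \<Rightarrow> 'a set \<Rightarrow> real) \<Rightarrow> bool" where
  "symmetric_setfun V d \<longleftrightarrow>
     (\<forall>S T. S \<subseteq> V \<and> T \<subseteq> V \<and> S \<inter> T = {} \<longrightarrow> d S T = d T S)"

definition monotone_setfun :: "'a set \<Rightarrow> ('a set \<Rightarrow> 'a set \<Rightarrow> real) \<Rightarrow> bool" where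
  "monotone_setfun V d \<longleftrightarrow>
     (\<forall>S T T'. S \<subseteq> V \<and> T \<subseteq> V \<and> S \<inter> T = {} \<and> T' \<subseteq> T \<longrightarrow> d S T' \<le> d S T)"

definition consistent_setfun :: "'a set \<Rightarrow> ('a set \<Rightarrow> 'a set \<Rightarrow> real) \<Rightarrow> bool" where
  "consistent_setfun V d \<longleftrightarrow>
     (\<forall>R S T. R \<subseteq> V \<and> S \<subseteq> V \<and> T \<subseteq> V \<and> R \<inter> S = {} \<and> R \<inter> T = {} \<and> S \<inter> T = {}
        \<longrightarrow> d S R \<ge> d T R \<longrightarrow> d S (R \<union> T) \<ge> d (S \<union> R) T)"

text \<open>lambda_(V,d)(s,t); the infimum of the empty set in ereal is +\<infinity>.\<close>
definition lam :: "'a set \<Rightarrow> ('a set \<Rightarrow> 'a set \<Rightarrow> real) \<Rightarrow> 'a \<Rightarrow> 'a \<Rightarrow> ereal" where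
  "lam V d s t = Inf {ereal (d S (V - S)) | S. s \<in> S \<and> S \<subseteq> V \<and> t \<notin> S}"

definition lam_all :: "'a set \<Rightarrow> ('a set \<Rightarrow> 'a set \<Rightarrow> real) \<Rightarrow> ereal" where
  "lam_all V d = Inf {lam V d s t | s t. s \<in> V \<and> t \<in> V}"

definition induced :: "('a set \<Rightarrow> 'a set \<Rightarrow> real) \<Rightarrow> 'a set set \<Rightarrow> 'a set set \<Rightarrow> real" where
  "induced d \<SS> \<TT> = d (\<Union>\<SS>) (\<Union>\<TT>)"

definition cls :: "'a set set \<Rightarrow> 'a \<Rightarrow> 'a set" where
  "cls P v = (THE X. X \<in> P \<and> v \<in> X)"

end

theory Submission
  imports Defs
begin

text \<open>A cut separating two vertices of the same class has value at least \<tau>, so every cut of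
  value below \<tau> is a union of classes, i.e. a cut of the contraction; conversely every cut of the
  contraction is a cut of d with the same value. Hence below \<tau> the cut values on both sides
  coincide, and so do the truncated minima.\<close>

lemma partition_on_cls_eq:
  assumes "partition_on V P" "X \<in> P" "v \<in> X"
  shows "cls P v = X"
  unfolding cls_def
proof (rule the_equality)
  show "X \<in> P \<and> v \<in> X" using assms by blast
  show "Y = X" if "Y \<in> P \<and> v \<in> Y" for Y
    using that assms partition_onD2[OF assms(1)] by (auto dest: disjointD)
qed

lemma partition_on_cls:
  assumes "partition_on V P" "v \<in> V"
  shows "cls P v \<in> P" "v \<in> cls P v"
proof -
  obtain X where "X \<in> P" "v \<in> X" using assms partition_onD1[OF assms(1)] by auto
  then show "cls P v \<in> P" "v \<in> cls P v" using partition_on_cls_eq[OF assms(1)] by auto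
qed

lemma partition_on_Union_Diff:
  assumes "partition_on V P" "\<SS> \<subseteq> P"
  shows "\<Union>(P - \<SS>) = V - \<Union>\<SS>"
  using assms partition_onD1[OF assms(1)] partition_onD2[OF assms(1)]
  by (auto dest: disjointD)

lemma partition_on_Union_saturated:
  assumes "partition_on V P" "S \<subseteq> V" "\<And>u. u \<in> S \<Longrightarrow> cls P u \<subseteq> S"
  shows "\<Union>{X \<in> P. X \<subseteq> S} = S"
  using assms partition_on_cls[OF assms(1)] by blast

lemma lam_le_cut:
  assumes "s \<in> S" "S \<subseteq> V" "t \<notin> S"
  shows "lam V d s t \<le> ereal (d S (V - S))"
  unfolding lam_def by (rule Inf_lower) (use assms in blast)

lemma lam_self: "lam V d s s = top"
  unfolding lam_def by auto

lemma lam_induced: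
  assumes "partition_on V P"
  shows "lam P (induced d) X Y =
    Inf {ereal (d (\<Union>\<SS>) (V - \<Union>\<SS>)) | \<SS>. X \<in> \<SS> \<and> \<SS> \<subseteq> P \<and> Y \<notin> \<SS>}"
proof -
  have "induced d \<SS> (P - \<SS>) = d (\<Union>\<SS>) (V - \<Union>\<SS>)" if "\<SS> \<subseteq> P" for \<SS>
    using partition_on_Union_Diff[OF assms that] by (simp add: induced_def)
  then show ?thesis
    unfolding lam_def by (metis (no_types, opaque_lifting))
qed

lemma cut_below_saturated:
  assumes "partition_on V P"
    and classes: "\<forall>u\<in>V. \<forall>v\<in>V. cls P u = cls P v \<longrightarrow> lam V d u v \<ge> ereal \<tau>"
    and "S \<subseteq> V" "ereal (d S (V - S)) < ereal \<tau>" "u \<in> S"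
  shows "cls P u \<subseteq> S"
proof
  fix v assume v: "v \<in> cls P u"
  have uV: "u \<in> V" using assms by blast
  have "v \<in> V" using v partition_on_cls(1)[OF assms(1) uV] partition_onD1[OF assms(1)] by blast
  moreover have "cls P v = cls P u"
    using partition_on_cls_eq[OF assms(1) partition_on_cls(1)[OF assms(1) uV] v] .
  ultimately have "lam V d u v \<ge> ereal \<tau>" using classes uV by metis
  then show "v \<in> S"
    using lam_le_cut[of u S V v d] assms(3-5) by (meson order.trans not_le)
qed

lemma min_Inf_eqI:
  fixes A B :: "'b::complete_linorder set"
  assumes "\<And>a. a \<in> A \<Longrightarrow> a < c \<Longrightarrow> \<exists>b\<in>B. b \<le> a"
    and "\<And>b. b \<in> B \<Longrightarrow> b < c \<Longrightarrow> \<exists>a\<in>A. a \<le> b"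
  shows "min c (Inf A) = min c (Inf B)"
proof -
  have "min c (Inf B) \<le> Inf A"
  proof (rule Inf_greatest)
    fix a assume "a \<in> A"
    show "min c (Inf B) \<le> a"
      using assms(1)[OF \<open>a \<in> A\<close>]
      by (meson Inf_lower min.coboundedI1 min.coboundedI2 not_le order_trans)
  qed
  moreover have "min c (Inf A) \<le> Inf B"
  proof (rule Inf_greatest)
    fix b assume "b \<in> B"
    show "min c (Inf A) \<le> b"
      using assms(2)[OF \<open>b \<in> B\<close>]
      by (meson Inf_lower min.coboundedI1 min.coboundedI2 not_le order_trans)
  qed
  ultimately show ?thesis by (simp add: antisym)
qed

lemma min_eq_imp_le:
  fixes x y c :: "'b::linorder"
  assumes "min c x = min c y" "y < c"
  shows "x \<le> y"
  using assms by (auto simp: min_def split: if_splits)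

lemma lam_contraction:
  assumes part: "partition_on V P"
    and classes: "\<forall>u\<in>V. \<forall>v\<in>V. cls P u = cls P v \<longrightarrow> lam V d u v \<ge> ereal \<tau>"
    and "s \<in> V" "t \<in> V" "cls P s \<noteq> cls P t"
  shows "min (ereal \<tau>) (lam P (induced d) (cls P s) (cls P t)) = min (ereal \<tau>) (lam V d s t)"
proof -
  define A where "A = {ereal (d S (V - S)) | S. s \<in> S \<and> S \<subseteq> V \<and> t \<notin> S}"
  define B where
    "B = {ereal (d (\<Union>\<SS>) (V - \<Union>\<SS>)) | \<SS>. cls P s \<in> \<SS> \<and> \<SS> \<subseteq> P \<and> cls P t \<notin> \<SS>}"
  have s: "cls P s \<in> P" "s \<in> cls P s" and t: "cls P t \<in> P" "t \<in> cls P t"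
    using partition_on_cls[OF part] assms(3,4) by auto
  have "b \<in> A" if "b \<in> B" for b
  proof -
    obtain \<SS> where \<SS>: "b = ereal (d (\<Union>\<SS>) (V - \<Union>\<SS>))" "cls P s \<in> \<SS>" "\<SS> \<subseteq> P" "cls P t \<notin> \<SS>"
      using \<open>b \<in> B\<close> unfolding B_def by blast
    have "t \<notin> \<Union>\<SS>" using \<SS>(3,4) partition_on_cls_eq[OF part] by blast
    moreover have "\<Union>\<SS> \<subseteq> V" using \<SS>(3) partition_onD1[OF part] by blast
    ultimately show ?thesis unfolding A_def using \<SS>(1,2) s by blast
  qed
  moreover have "a \<in> B" if "a \<in> A" "a < ereal \<tau>" for a
  proof -
    obtain S where S: "a = ereal (d S (V - S))" "s \<in> S" "S \<subseteq> V" "t \<notin> S"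
      using \<open>a \<in> A\<close> unfolding A_def by blast
    have saturated: "cls P u \<subseteq> S" if "u \<in> S" for u
      using cut_below_saturated[OF part classes S(3)] S(1) \<open>a < ereal \<tau>\<close> that by blast
    define \<SS> where "\<SS> = {X \<in> P. X \<subseteq> S}"
    have "\<Union>\<SS> = S"
      unfolding \<SS>_def using partition_on_Union_saturated[OF part S(3) saturated] .
    moreover have "\<SS> \<subseteq> P" "cls P s \<in> \<SS>" "cls P t \<notin> \<SS>"
      unfolding \<SS>_def using saturated[OF S(2)] s t S(4) by auto
    ultimately show ?thesis unfolding B_def using S(1) by blast
  qed
  ultimately have "min (ereal \<tau>) (Inf B) = min (ereal \<tau>) (Inf A)"
    by (intro min_Inf_eqI) blast+
  then show ?thesis
    unfolding lam_induced[OF part] by (simp add: lam_def A_def B_def)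
qed

lemma lam_all_contraction:
  assumes part: "partition_on V P"
    and classes: "\<forall>u\<in>V. \<forall>v\<in>V. cls P u = cls P v \<longrightarrow> lam V d u v \<ge> ereal \<tau>"
  shows "min (ereal \<tau>) (lam_all P (induced d)) = min (ereal \<tau>) (lam_all V d)"
  unfolding lam_all_def
proof (rule min_Inf_eqI)
  fix b assume "b \<in> {lam P (induced d) X Y | X Y. X \<in> P \<and> Y \<in> P}" and b: "b < ereal \<tau>"
  then obtain X Y where XY: "b = lam P (induced d) X Y" "X \<in> P" "Y \<in> P"
    by blast
  have "X \<noteq> Y" using XY(1) b by (auto simp: lam_self)
  obtain s t where "s \<in> X" "t \<in> Y"
    using XY(2,3) partition_onD3[OF part] by (metis ex_in_conv)
  then have st: "s \<in> V" "t \<in> V" "cls P s = X" "cls P t = Y"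
    using XY(2,3) partition_onD1[OF part] partition_on_cls_eq[OF part] by auto
  then have "min (ereal \<tau>) b = min (ereal \<tau>) (lam V d s t)"
    using lam_contraction[OF part classes] XY(1) \<open>X \<noteq> Y\<close> by blast
  then have "lam V d s t \<le> b" using b by (metis min_eq_imp_le)
  then show "\<exists>a\<in>{lam V d s t | s t. s \<in> V \<and> t \<in> V}. a \<le> b" using st by blast
next
  fix a assume "a \<in> {lam V d s t | s t. s \<in> V \<and> t \<in> V}" and a: "a < ereal \<tau>"
  then obtain s t where st: "a = lam V d s t" "s \<in> V" "t \<in> V"
    by blast
  have "cls P s \<noteq> cls P t" using classes st a by (metis not_le)
  then have "min (ereal \<tau>) (lam P (induced d) (cls P s) (cls P t)) = min (ereal \<tau>) a"
    using lam_contraction[OF part classes] st by blast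
  then have "lam P (induced d) (cls P s) (cls P t) \<le> a" using a by (rule min_eq_imp_le)
  moreover have "cls P s \<in> P" "cls P t \<in> P" using partition_on_cls(1)[OF part] st by auto
  ultimately show "\<exists>b\<in>{lam P (induced d) X Y | X Y. X \<in> P \<and> Y \<in> P}. b \<le> a" by blast
qed

theorem lemma6:
  fixes V :: "'a set" and d :: "'a set \<Rightarrow> 'a set \<Rightarrow> real" and \<tau> :: real
    and P :: "'a set set"
  assumes "finite V"
    and "symmetric_setfun V d" and "monotone_setfun V d" and "consistent_setfun V d"
    and "partition_on V P"
    and "\<forall>u\<in>V. \<forall>v\<in>V. cls P u = cls P v \<longrightarrow> lam V d u v \<ge> ereal \<tau>"
  shows "(\<forall>s\<in>V. \<forall>t\<in>V. cls P s \<noteq> cls P t \<longrightarrow>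
            min (ereal \<tau>) (lam P (induced d) (cls P s) (cls P t)) = min (ereal \<tau>) (lam V d s t))
       \<and> min (ereal \<tau>) (lam_all P (induced d)) = min (ereal \<tau>) (lam_all V d)"
  using lam_contraction[OF assms(5,6)] lam_all_contraction[OF assms(5,6)] by blast

end
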